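(* Let $\{Y_k\}$ be a fourth-order stationary sequence with $EY_k=0$, autocovariances $\gamma_j=\mathrm{Cov}(Y_0,Y_j)$ and cumulants $\kappa(h,r,s)$, satisfying: (a) $n^{-1/2}\sum_{1\le j\le nt}Y_j\xrightarrow{d}\sigma W(t)$ in $D[0,1]$ for some $\sigma>0$; (b) $\sum_j|\gamma_j|<\infty$; (c) $\sup_h\sum_{r,s}|\kappa(h,r,s)|<\infty$. For each $n$ let $X_i=\mu+Y_i$ for $1\le i\le k^*$ and $X_i=\mu+\Delta+Y_i$ for $k^*<i\le n$, where $k^*=[n\theta]$ for some $0<\theta<1$, and $\Delta=\Delta(n)$ satisfies $n\Delta^2\to\infty$, $\Delta^2|\hat k-k^*|=O_P(1)$ and $q(n)\Delta^2=O(1)$. Suppose $q(n)\to\infty$ and $q(n)/n\to0$. Then $s_n^2=O_P(1)$.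
   Context: Fourth-order stationary means finite fourth moments and shift-invariant joint moments of order at most four; $\kappa(h,r,s)=E[Y_kY_{k+h}Y_{k+r}Y_{k+s}]-(\gamma_h\gamma_{r-s}+\gamma_r\gamma_{h-s}+\gamma_s\gamma_{h-r})$. $q(n)$ is a sequence of positive integers, $\omega_j(q)=1-j/(q+1)$, $\bar X_n=\frac1n\sum_{i\le n}X_i$, $\hat\gamma_j=\frac1n\sum_{1\le i\le n-j}(X_i-\bar X_n)(X_{i+j}-\bar X_n)$, $s_n^2=\hat\gamma_0+2\sum_{1\le j\le q(n)}\omega_j(q(n))\hat\gamma_j$; $\hat k=\min\{k:\max_{1\le i\le n}|\sum_{j\le i}X_j-\frac in\sum_{j\le n}X_j|=|\sum_{j\le k}X_j-\frac kn\sum_{j\le n}X_j|\}$. *)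

theory Defs
  imports "HOL-Probability.Probability" "HOL-Library.Landau_Symbols"
begin

definition fourth_order_stationary :: "'a measure \<Rightarrow> (int \<Rightarrow> 'a \<Rightarrow> real) \<Rightarrow> bool" where
  "fourth_order_stationary M Y \<longleftrightarrow>
     (\<forall>k. Y k \<in> borel_measurable M) \<and>
     (\<forall>k. integrable M (\<lambda>\<omega>. (Y k \<omega>) ^ 4)) \<and>
     (\<forall>k. (\<integral>\<omega>. Y k \<omega> \<partial>M) = (\<integral>\<omega>. Y 0 \<omega> \<partial>M)) \<and>
     (\<forall>k h. (\<integral>\<omega>. Y k \<omega> * Y (k+h) \<omega> \<partial>M) = (\<integral>\<omega>. Y 0 \<omega> * Y h \<omega> \<partial>M)) \<and>
     (\<forall>k h r. (\<integral>\<omega>. Y k \<omega> * Y (k+h) \<omega> * Y (k+r) \<omega> \<partial>M)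
              = (\<integral>\<omega>. Y 0 \<omega> * Y h \<omega> * Y r \<omega> \<partial>M)) \<and>
     (\<forall>k h r s. (\<integral>\<omega>. Y k \<omega> * Y (k+h) \<omega> * Y (k+r) \<omega> * Y (k+s) \<omega> \<partial>M)
              = (\<integral>\<omega>. Y 0 \<omega> * Y h \<omega> * Y r \<omega> * Y s \<omega> \<partial>M))"

definition autocov :: "'a measure \<Rightarrow> (int \<Rightarrow> 'a \<Rightarrow> real) \<Rightarrow> int \<Rightarrow> real" where
  "autocov M Y j = (\<integral>\<omega>. (Y 0 \<omega> - (\<integral>\<omega>'. Y 0 \<omega>' \<partial>M)) * (Y j \<omega> - (\<integral>\<omega>'. Y j \<omega>' \<partial>M)) \<partial>M)"

definition cum4 :: "'a measure \<Rightarrow> (int \<Rightarrow> 'a \<Rightarrow> real) \<Rightarrow> int \<Rightarrow> int \<Rightarrow> int \<Rightarrow> real" where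
  "cum4 M Y h r s = (\<integral>\<omega>. Y 0 \<omega> * Y h \<omega> * Y r \<omega> * Y s \<omega> \<partial>M)
     - (autocov M Y h * autocov M Y (r - s) + autocov M Y r * autocov M Y (h - s)
        + autocov M Y s * autocov M Y (h - r))"

definition std_brownian_motion :: "'b measure \<Rightarrow> (real \<Rightarrow> 'b \<Rightarrow> real) \<Rightarrow> bool" where
  "std_brownian_motion N W \<longleftrightarrow>
     prob_space N \<and> (\<forall>t. W t \<in> borel_measurable N) \<and>
     (\<forall>\<omega>\<in>space N. W 0 \<omega> = 0 \<and> continuous_on {0..1} (\<lambda>t. W t \<omega>)) \<and>
     (\<forall>(m::nat) (t::nat \<Rightarrow> real). t 0 \<ge> 0 \<and> t m \<le> 1 \<and> (\<forall>i<m. t i < t (Suc i)) \<longrightarrow>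
        prob_space.indep_vars N (\<lambda>_. borel) (\<lambda>i \<omega>. W (t (Suc i)) \<omega> - W (t i) \<omega>) {..<m} \<and>
        (\<forall>i<m. distributed N lborel (\<lambda>\<omega>. W (t (Suc i)) \<omega> - W (t i) \<omega>)
                  (\<lambda>x. ennreal (normal_density 0 (sqrt (t (Suc i) - t i)) x))))"

definition cadlag01 :: "(real \<Rightarrow> real) \<Rightarrow> bool" where
  "cadlag01 x \<longleftrightarrow> (\<forall>t\<in>{0..<1}. (x \<longlongrightarrow> x t) (at_right t)) \<and>
                   (\<forall>t\<in>{0<..1}. \<exists>l. (x \<longlongrightarrow> l) (at_left t))"

definition time_changes :: "(real \<Rightarrow> real) set" where
  "time_changes = {l. strict_mono_on {0..1} l \<and> continuous_on {0..1} l \<and> l ` {0..1} = {0..1}}"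

definition skorokhod_dist :: "(real \<Rightarrow> real) \<Rightarrow> (real \<Rightarrow> real) \<Rightarrow> real" where
  "skorokhod_dist x y = Inf {max (SUP t\<in>{0..1}. \<bar>l t - t\<bar>) (SUP t\<in>{0..1}. \<bar>x t - y (l t)\<bar>) | l. l \<in> time_changes}"

definition skorokhod_continuous :: "((real \<Rightarrow> real) \<Rightarrow> real) \<Rightarrow> bool" where
  "skorokhod_continuous f \<longleftrightarrow> (\<forall>x. cadlag01 x \<longrightarrow> (\<forall>e>0. \<exists>d>0. \<forall>y. cadlag01 y \<longrightarrow>
       skorokhod_dist x y < d \<longrightarrow> \<bar>f y - f x\<bar> < e))"

definition converges_in_dist_D ::
    "'a measure \<Rightarrow> (nat \<Rightarrow> 'a \<Rightarrow> real \<Rightarrow> real) \<Rightarrow> 'b measure \<Rightarrow> ('b \<Rightarrow> real \<Rightarrow> real) \<Rightarrow> bool" where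
  "converges_in_dist_D M S N Z \<longleftrightarrow>
     (\<forall>f. (\<exists>B. \<forall>x. cadlag01 x \<longrightarrow> \<bar>f x\<bar> \<le> B) \<and> skorokhod_continuous f \<longrightarrow>
        (\<lambda>n. \<integral>\<omega>. f (S n \<omega>) \<partial>M) \<longlonglongrightarrow> (\<integral>\<omega>. f (Z \<omega>) \<partial>N))"

definition partial_sum_process :: "(int \<Rightarrow> 'a \<Rightarrow> real) \<Rightarrow> nat \<Rightarrow> 'a \<Rightarrow> real \<Rightarrow> real" where
  "partial_sum_process Y n \<omega> t = (\<Sum>j\<in>{1..\<lfloor>real n * t\<rfloor>}. Y j \<omega>) / sqrt (real n)"

definition bounded_in_prob :: "'a measure \<Rightarrow> (nat \<Rightarrow> 'a \<Rightarrow> real) \<Rightarrow> bool" where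
  "bounded_in_prob M Z \<longleftrightarrow>
     (\<forall>\<epsilon>>0. \<exists>B. \<forall>\<^sub>F n in sequentially. measure M {\<omega>\<in>space M. \<bar>Z n \<omega>\<bar> > B} < \<epsilon>)"

definition sample_mean :: "nat \<Rightarrow> (nat \<Rightarrow> real) \<Rightarrow> real" where
  "sample_mean n x = (\<Sum>i=1..n. x i) / real n"

definition gamma_hat :: "nat \<Rightarrow> (nat \<Rightarrow> real) \<Rightarrow> nat \<Rightarrow> real" where
  "gamma_hat n x j = (\<Sum>i=1..n-j. (x i - sample_mean n x) * (x (i+j) - sample_mean n x)) / real n"

definition bartlett :: "nat \<Rightarrow> nat \<Rightarrow> real" where
  "bartlett q j = 1 - real j / real (q + 1)"

definition lrv_est :: "nat \<Rightarrow> nat \<Rightarrow> (nat \<Rightarrow> real) \<Rightarrow> real" where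
  "lrv_est n q x = gamma_hat n x 0 + 2 * (\<Sum>j=1..q. bartlett q j * gamma_hat n x j)"

definition cusum :: "nat \<Rightarrow> (nat \<Rightarrow> real) \<Rightarrow> nat \<Rightarrow> real" where
  "cusum n x k = (\<Sum>j=1..k. x j) - real k / real n * (\<Sum>j=1..n. x j)"

definition khat :: "nat \<Rightarrow> (nat \<Rightarrow> real) \<Rightarrow> nat" where
  "khat n x = (LEAST k. 1 \<le> k \<and> k \<le> n \<and>
      \<bar>cusum n x k\<bar> = Max ((\<lambda>i. \<bar>cusum n x i\<bar>) ` {1..n}))"

end

theory Submission
  imports Defs
begin

(* The Bartlett estimator is a sum of squares: if e is the centred sample padded with zeros,
   then (q+1) n s_n^2 = sum_t (e_t + ... + e_(t+q))^2.  Hence s_n^2 >= 0, and by Markov's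
   inequality it suffices to bound E s_n^2.  Write X_i - mean X = (c_i - mean c) + (Y_i - mean Y),
   where the deterministic part c is the mean shift, so |c_i - mean c| <= |Delta|.  Every lag then
   satisfies |E gamma_hat_j| <= Delta^2 + |gamma_j| + 3 G / n with G = sum_j |gamma_j|, so
   E s_n^2 <= (2q+1) (Delta^2 + 3 G / n) + 2 G, which is O(q Delta^2 + q / n + 1) = O(1). *)

section \<open>Algebra of the Bartlett estimator\<close>

lemma sum_atMost_reflect:
  fixes R :: "nat \<Rightarrow> real"
  shows "(\<Sum>l\<le>p. R (Suc p - l)) = (\<Sum>h=1..Suc p. R h)"
proof -
  have "(\<Sum>l\<le>p. R (Suc p - l)) = (\<Sum>l<Suc p. R (Suc l))"
    using sum.nat_diff_reindex[of "\<lambda>l. R (Suc l)" "Suc p"]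
    by (simp add: lessThan_Suc_atMost Suc_diff_le)
  also have "\<dots> = (\<Sum>h=1..Suc p. R h)"
    by (simp add: sum.atLeast1_atMost_eq)
  finally show ?thesis .
qed

lemma toeplitz_double_sum:
  fixes R :: "nat \<Rightarrow> real"
  shows "(\<Sum>l\<le>p. \<Sum>m\<le>p. R (max l m - min l m))
           = real (p + 1) * R 0 + 2 * (\<Sum>h=1..p. real (p + 1 - h) * R h)"
proof (induction p)
  case 0
  then show ?case by simp
next
  case (Suc p)
  have border: "(\<Sum>l\<le>p. R (max l (Suc p) - min l (Suc p))) = (\<Sum>h=1..Suc p. R h)"
               "(\<Sum>m\<le>p. R (max (Suc p) m - min (Suc p) m)) = (\<Sum>h=1..Suc p. R h)"
    by (simp_all add: max_def min_def sum_atMost_reflect)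
  have weights: "(\<Sum>h=1..Suc p. real (Suc p + 1 - h) * R h)
                   = (\<Sum>h=1..p. real (p + 1 - h) * R h) + (\<Sum>h=1..Suc p. R h)"
    by (simp add: sum.distrib[symmetric] Suc_diff_le algebra_simps)
  have "(\<Sum>l\<le>Suc p. \<Sum>m\<le>Suc p. R (max l m - min l m))
          = (\<Sum>l\<le>p. \<Sum>m\<le>p. R (max l m - min l m)) + 2 * (\<Sum>h=1..Suc p. R h) + R 0"
    by (simp only: sum.atMost_Suc sum.distrib border) simp
  then show ?case
    by (simp only: Suc.IH weights) (simp add: algebra_simps)
qed

lemma sum_padded_lag_products:
  fixes x :: "nat \<Rightarrow> real" and e :: "int \<Rightarrow> real"
  assumes e: "\<And>i. e i = (if 1 \<le> i \<and> i \<le> int n then x (nat i) - c else 0)"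
    and T: "finite T" "{1 - int l .. int n - int l} \<subseteq> T"
  shows "(\<Sum>t\<in>T. e (t + int l) * e (t + int l + int j)) = (\<Sum>i=1..n-j. (x i - c) * (x (i+j) - c))"
proof -
  let ?S = "{1 - int l .. int (n - j) - int l}"
  have "(\<Sum>t\<in>T. e (t + int l) * e (t + int l + int j)) = (\<Sum>t\<in>?S. e (t + int l) * e (t + int l + int j))"
  proof (rule sum.mono_neutral_right[OF T(1)])
    show "?S \<subseteq> T"
      using T(2) by (rule order_trans[rotated]) auto
  qed (auto simp: e)
  also have "\<dots> = (\<Sum>i=1..n-j. (x i - c) * (x (i+j) - c))"
    by (rule sum.reindex_bij_witness[of _ "\<lambda>i. int i - int l" "\<lambda>t. nat (t + int l)"])
       (auto simp: e nat_add_distrib)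
  finally show ?thesis .
qed

lemma lrv_est_sum_of_squares:
  fixes x :: "nat \<Rightarrow> real"
  assumes "n > 0"
  defines "e \<equiv> \<lambda>i. if 1 \<le> i \<and> i \<le> int n then x (nat i) - sample_mean n x else 0"
  shows "real (q + 1) * real n * lrv_est n q x
           = (\<Sum>t\<in>{- int (n + q) .. int (n + q)}. (\<Sum>l\<le>q. e (t + int l))\<^sup>2)"
proof -
  let ?T = "{- int (n + q) .. int (n + q)}"
  have lag: "(\<Sum>t\<in>?T. e (t + int l) * e (t + int m)) = real n * gamma_hat n x (max l m - min l m)"
    if "l \<le> q" "m \<le> q" for l m
  proof -
    have "(\<Sum>t\<in>?T. e (t + int l) * e (t + int m))
            = (\<Sum>t\<in>?T. e (t + int (min l m)) * e (t + int (min l m) + int (max l m - min l m)))"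
      by (intro sum.cong) (auto simp: min_def max_def mult.commute)
    also have "\<dots> = real n * gamma_hat n x (max l m - min l m)"
      using that \<open>n > 0\<close>
      by (subst sum_padded_lag_products[where x = x and n = n and c = "sample_mean n x"])
         (auto simp: e_def gamma_hat_def)
    finally show ?thesis .
  qed
  have "(\<Sum>t\<in>?T. (\<Sum>l\<le>q. e (t + int l))\<^sup>2)
          = (\<Sum>l\<le>q. \<Sum>m\<le>q. \<Sum>t\<in>?T. e (t + int l) * e (t + int m))"
    unfolding power2_eq_square sum_product
    by (subst sum.swap, rule sum.cong, simp, subst sum.swap, simp)
  also have "\<dots> = (\<Sum>l\<le>q. \<Sum>m\<le>q. real n * gamma_hat n x (max l m - min l m))"
    by (intro sum.cong refl lag) auto
  also have "\<dots> = real n * (real (q + 1) * gamma_hat n x 0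
                    + 2 * (\<Sum>h=1..q. real (q + 1 - h) * gamma_hat n x h))"
    by (simp add: sum_distrib_left[symmetric] toeplitz_double_sum)
  also have "\<dots> = real (q + 1) * real n * lrv_est n q x"
  proof -
    have "real (q + 1 - h) = real (q + 1) * bartlett q h" if "h \<le> q" for h
      using that by (simp add: bartlett_def field_simps)
    then have "(\<Sum>h=1..q. real (q + 1 - h) * gamma_hat n x h)
                 = real (q + 1) * (\<Sum>h=1..q. bartlett q h * gamma_hat n x h)"
      unfolding sum_distrib_left by (intro sum.cong) auto
    then show ?thesis
      by (simp add: lrv_est_def algebra_simps)
  qed
  finally show ?thesis ..
qed

lemma lrv_est_nonneg: "0 \<le> lrv_est n q x"
proof (cases "n = 0")
  case True
  then show ?thesis by (simp add: lrv_est_def gamma_hat_def)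
next
  case False
  then have "n > 0" by simp
  then have "0 \<le> real (q + 1) * real n * lrv_est n q x"
    unfolding lrv_est_sum_of_squares[where n = n, OF \<open>n > 0\<close>] by (intro sum_nonneg) auto
  moreover have "0 < real (q + 1) * real n"
    using \<open>n > 0\<close> by simp
  ultimately show ?thesis
    by (simp add: zero_le_mult_iff)
qed

lemma bartlett_nonneg: "j \<le> q + 1 \<Longrightarrow> 0 \<le> bartlett q j"
  by (simp add: bartlett_def)

lemma bartlett_le_one: "bartlett q j \<le> 1"
  by (simp add: bartlett_def)

lemma abs_diff_sample_mean_le:
  fixes c :: "nat \<Rightarrow> real"
  assumes "n > 0" and D: "\<And>i k. \<bar>c i - c k\<bar> \<le> D"
  shows "\<bar>c i - sample_mean n c\<bar> \<le> D"
proof -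
  have "\<bar>c i - sample_mean n c\<bar> = \<bar>\<Sum>k=1..n. c i - c k\<bar> / real n"
    using \<open>n > 0\<close> by (simp add: sample_mean_def sum_subtractf field_simps)
  also have "\<dots> \<le> (\<Sum>k=1..n. \<bar>c i - c k\<bar>) / real n"
    by (intro divide_right_mono sum_abs) simp
  also have "\<dots> \<le> (\<Sum>k=1..n. D) / real n"
    by (intro divide_right_mono sum_mono D) simp
  also have "\<dots> = D"
    using \<open>n > 0\<close> by simp
  finally show ?thesis .
qed

lemma sample_mean_add: "sample_mean n (\<lambda>i. x i + y i) = sample_mean n x + sample_mean n y"
  by (simp add: sample_mean_def sum.distrib add_divide_distrib)

section \<open>Square-integrable random variables\<close>

definition square_integrable :: "'a measure \<Rightarrow> ('a \<Rightarrow> real) \<Rightarrow> bool" where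
  "square_integrable M f \<longleftrightarrow> f \<in> borel_measurable M \<and> integrable M (\<lambda>\<omega>. (f \<omega>)\<^sup>2)"

lemma integrable_mult_square_integrable:
  assumes "square_integrable M f" "square_integrable M g"
  shows "integrable M (\<lambda>\<omega>. f \<omega> * g \<omega>)"
proof (rule Bochner_Integration.integrable_bound)
  show "integrable M (\<lambda>\<omega>. (f \<omega>)\<^sup>2 + (g \<omega>)\<^sup>2)"
    using assms by (simp add: square_integrable_def)
  show "(\<lambda>\<omega>. f \<omega> * g \<omega>) \<in> borel_measurable M"
    using assms unfolding square_integrable_def by (auto intro: borel_measurable_times)
  show "AE \<omega> in M. norm (f \<omega> * g \<omega>) \<le> norm ((f \<omega>)\<^sup>2 + (g \<omega>)\<^sup>2)"
  proof (rule AE_I2)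
    fix \<omega>
    have "2 * \<bar>f \<omega>\<bar> * \<bar>g \<omega>\<bar> \<le> \<bar>f \<omega>\<bar>\<^sup>2 + \<bar>g \<omega>\<bar>\<^sup>2"
      by (rule sum_squares_bound)
    then have "\<bar>f \<omega>\<bar> * \<bar>g \<omega>\<bar> \<le> (f \<omega>)\<^sup>2 + (g \<omega>)\<^sup>2"
      using mult_nonneg_nonneg[OF abs_ge_zero abs_ge_zero, of "f \<omega>" "g \<omega>"]
      by (simp only: power2_abs mult.assoc)
    then show "norm (f \<omega> * g \<omega>) \<le> norm ((f \<omega>)\<^sup>2 + (g \<omega>)\<^sup>2)"
      by (simp add: abs_mult)
  qed
qed

lemma square_integrable_add:
  assumes "square_integrable M f" "square_integrable M g"
  shows "square_integrable M (\<lambda>\<omega>. f \<omega> + g \<omega>)"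
proof -
  have "integrable M (\<lambda>\<omega>. (f \<omega>)\<^sup>2 + (g \<omega>)\<^sup>2 + 2 * f \<omega> * g \<omega>)"
    using assms integrable_mult_square_integrable[OF assms]
    by (simp add: square_integrable_def mult.assoc)
  then show ?thesis
    using assms unfolding square_integrable_def power2_sum by (auto intro: borel_measurable_add)
qed

lemma square_integrable_cmult: "square_integrable M f \<Longrightarrow> square_integrable M (\<lambda>\<omega>. a * f \<omega>)"
  by (auto simp: square_integrable_def power_mult_distrib intro: borel_measurable_times)

lemma square_integrable_diff:
  "square_integrable M f \<Longrightarrow> square_integrable M g \<Longrightarrow> square_integrable M (\<lambda>\<omega>. f \<omega> - g \<omega>)"
  using square_integrable_add[of M f "\<lambda>\<omega>. (-1) * g \<omega>"] square_integrable_cmult[of M g "-1"] by simp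

lemma square_integrable_sum:
  "(\<And>i. i \<in> A \<Longrightarrow> square_integrable M (f i)) \<Longrightarrow> square_integrable M (\<lambda>\<omega>. \<Sum>i\<in>A. f i \<omega>)"
  by (induction A rule: infinite_finite_induct)
     (simp_all add: square_integrable_add, simp_all add: square_integrable_def)

lemma (in finite_measure) square_integrable_const: "square_integrable M (\<lambda>_. c)"
  by (simp add: square_integrable_def)

lemma (in finite_measure) integrable_square_integrable: "square_integrable M f \<Longrightarrow> integrable M f"
  unfolding square_integrable_def by (blast intro: square_integrable_imp_integrable)

lemma (in finite_measure) square_integrable_of_fourth_moment:
  assumes f: "f \<in> borel_measurable M" and f4: "integrable M (\<lambda>\<omega>. (f \<omega>) ^ 4)"
  shows "square_integrable M f"
proof -
  have "integrable M (\<lambda>\<omega>. (f \<omega>)\<^sup>2)"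
  proof (rule Bochner_Integration.integrable_bound)
    show "integrable M (\<lambda>\<omega>. 1 + (f \<omega>) ^ 4)"
      using f4 by simp
    show "(\<lambda>\<omega>. (f \<omega>)\<^sup>2) \<in> borel_measurable M"
      using f by measurable
    show "AE \<omega> in M. norm ((f \<omega>)\<^sup>2) \<le> norm (1 + (f \<omega>) ^ 4)"
    proof (rule AE_I2)
      fix \<omega>
      have "0 \<le> ((f \<omega>)\<^sup>2 - 1)\<^sup>2"
        by simp
      then have "2 * (f \<omega>)\<^sup>2 \<le> 1 + (f \<omega>) ^ 4"
        by (simp add: power2_eq_square power4_eq_xxxx algebra_simps)
      then have "(f \<omega>)\<^sup>2 \<le> 1 + (f \<omega>) ^ 4"
        using zero_le_power2[of "f \<omega>"] by linarith
      then show "norm ((f \<omega>)\<^sup>2) \<le> norm (1 + (f \<omega>) ^ 4)"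
        by (simp add: zero_le_even_power)
    qed
  qed
  then show ?thesis
    using f by (simp add: square_integrable_def)
qed

lemma square_integrable_sample_mean:
  "(\<And>i. square_integrable M (X i)) \<Longrightarrow> square_integrable M (\<lambda>\<omega>. sample_mean n (\<lambda>i. X i \<omega>))"
  unfolding sample_mean_def divide_inverse mult.commute[of _ "inverse _"]
  by (intro square_integrable_cmult square_integrable_sum)

lemma integrable_centered_lag_product:
  assumes "\<And>i. square_integrable M (X i)"
  shows "integrable M (\<lambda>\<omega>. (X i \<omega> - sample_mean n (\<lambda>i. X i \<omega>)) * (X k \<omega> - sample_mean n (\<lambda>i. X i \<omega>)))"
  using assms by (intro integrable_mult_square_integrable square_integrable_diff square_integrable_sample_mean)

lemma integrable_gamma_hat:
  "(\<And>i. square_integrable M (X i)) \<Longrightarrow> integrable M (\<lambda>\<omega>. gamma_hat n (\<lambda>i. X i \<omega>) j)"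
  unfolding gamma_hat_def by (intro integrable_divide Bochner_Integration.integrable_sum
      integrable_centered_lag_product)

lemma expectation_gamma_hat:
  assumes "\<And>i. square_integrable M (X i)"
  shows "(\<integral>\<omega>. gamma_hat n (\<lambda>i. X i \<omega>) j \<partial>M)
           = (\<Sum>i=1..n-j. \<integral>\<omega>. (X i \<omega> - sample_mean n (\<lambda>i. X i \<omega>))
                               * (X (i+j) \<omega> - sample_mean n (\<lambda>i. X i \<omega>)) \<partial>M) / real n"
  unfolding gamma_hat_def
  by (simp only: integral_divide_zero Bochner_Integration.integral_sum
      integrable_centered_lag_product assms)

lemma integrable_lrv_est:
  "(\<And>i. square_integrable M (X i)) \<Longrightarrow> integrable M (\<lambda>\<omega>. lrv_est n q (\<lambda>i. X i \<omega>))"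
  unfolding lrv_est_def by (intro Bochner_Integration.integrable_add integrable_mult_right
      Bochner_Integration.integrable_sum integrable_gamma_hat)

lemma expectation_lrv_est_le_lag_bounds:
  assumes X: "\<And>i. square_integrable M (X i)"
    and lag: "\<And>j. \<bar>\<integral>\<omega>. gamma_hat n (\<lambda>i. X i \<omega>) j \<partial>M\<bar> \<le> b j"
  shows "(\<integral>\<omega>. lrv_est n q (\<lambda>i. X i \<omega>) \<partial>M) \<le> b 0 + 2 * (\<Sum>j=1..q. b j)"
proof -
  let ?E = "\<lambda>j. \<integral>\<omega>. gamma_hat n (\<lambda>i. X i \<omega>) j \<partial>M"
  have "bartlett q j * ?E j \<le> b j" if "j \<in> {1..q}" for j
  proof -
    have w: "0 \<le> bartlett q j"
      using that by (intro bartlett_nonneg) simp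
    have "bartlett q j * ?E j \<le> bartlett q j * b j"
      using w lag[of j] by (intro mult_left_mono) auto
    also have "\<dots> \<le> b j"
      using w lag[of j] bartlett_le_one[of q j] by (intro mult_left_le_one_le) auto
    finally show ?thesis .
  qed
  then have "(\<Sum>j=1..q. bartlett q j * ?E j) \<le> (\<Sum>j=1..q. b j)"
    by (rule sum_mono)
  moreover have "?E 0 \<le> b 0"
    using lag[of 0] by simp
  ultimately show ?thesis
    using X by (simp add: lrv_est_def integrable_gamma_hat)
qed

section \<open>Centred stationary sequences with summable autocovariances\<close>

locale centered_stationary = prob_space +
  fixes Y :: "int \<Rightarrow> 'a \<Rightarrow> real"
  assumes square_integrable_Y: "square_integrable M (Y k)"
    and expectation_Y: "expectation (Y k) = 0"
    and covariance_shift: "expectation (\<lambda>\<omega>. Y k \<omega> * Y (k + h) \<omega>) = expectation (\<lambda>\<omega>. Y 0 \<omega> * Y h \<omega>)"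
    and abs_autocov_summable: "(\<lambda>j. \<bar>autocov M Y j\<bar>) summable_on UNIV"
begin

definition abs_autocov_sum :: real where
  "abs_autocov_sum = (\<Sum>\<^sub>\<infinity>j. \<bar>autocov M Y j\<bar>)"

lemma expectation_Y_mult: "expectation (\<lambda>\<omega>. Y a \<omega> * Y b \<omega>) = autocov M Y (b - a)"
  using covariance_shift[of a "b - a"] by (simp add: autocov_def expectation_Y)

lemma sum_abs_autocov_le:
  assumes "finite F" "inj_on \<phi> F"
  shows "(\<Sum>m\<in>F. \<bar>autocov M Y (\<phi> m)\<bar>) \<le> abs_autocov_sum"
proof -
  have "(\<Sum>m\<in>F. \<bar>autocov M Y (\<phi> m)\<bar>) = (\<Sum>j\<in>\<phi> ` F. \<bar>autocov M Y j\<bar>)"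
    using assms by (simp add: sum.reindex)
  also have "\<dots> \<le> abs_autocov_sum"
    unfolding abs_autocov_sum_def
    using assms by (intro finite_sum_le_infsum abs_autocov_summable) auto
  finally show ?thesis .
qed

lemma abs_autocov_sum_nonneg: "0 \<le> abs_autocov_sum"
  using sum_abs_autocov_le[of "{}"] by simp

abbreviation Y_mean :: "nat \<Rightarrow> 'a \<Rightarrow> real" where
  "Y_mean n \<omega> \<equiv> sample_mean n (\<lambda>i. Y (int i) \<omega>)"

lemma square_integrable_Y_mean: "square_integrable M (Y_mean n)"
  by (intro square_integrable_sample_mean square_integrable_Y)

lemma expectation_Y_mean: "expectation (Y_mean n) = 0"
  using square_integrable_Y
  by (simp add: sample_mean_def integrable_square_integrable expectation_Y)

lemma abs_expectation_Y_mult_Y_mean: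
  assumes "n > 0"
  shows "\<bar>expectation (\<lambda>\<omega>. Y a \<omega> * Y_mean n \<omega>)\<bar> \<le> abs_autocov_sum / real n"
proof -
  have "expectation (\<lambda>\<omega>. Y a \<omega> * Y_mean n \<omega>)
          = (\<Sum>k=1..n. expectation (\<lambda>\<omega>. Y a \<omega> * Y (int k) \<omega>)) / real n"
    by (simp add: sample_mean_def sum_distrib_left integrable_mult_square_integrable
        square_integrable_Y)
  also have "\<dots> = (\<Sum>k=1..n. autocov M Y (int k - a)) / real n"
    by (simp add: expectation_Y_mult)
  finally have "\<bar>expectation (\<lambda>\<omega>. Y a \<omega> * Y_mean n \<omega>)\<bar>
                  \<le> (\<Sum>k=1..n. \<bar>autocov M Y (int k - a)\<bar>) / real n"
    by (simp add: divide_right_mono)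
  also have "\<dots> \<le> abs_autocov_sum / real n"
    by (intro divide_right_mono sum_abs_autocov_le) (auto simp: inj_on_def)
  finally show ?thesis .
qed

lemma abs_expectation_Y_mean_square:
  assumes "n > 0"
  shows "\<bar>expectation (\<lambda>\<omega>. Y_mean n \<omega> * Y_mean n \<omega>)\<bar> \<le> abs_autocov_sum / real n"
proof -
  have "expectation (\<lambda>\<omega>. Y_mean n \<omega> * Y_mean n \<omega>)
          = (\<Sum>k=1..n. expectation (\<lambda>\<omega>. Y (int k) \<omega> * Y_mean n \<omega>)) / real n"
  proof -
    have "expectation (\<lambda>\<omega>. Y_mean n \<omega> * Y_mean n \<omega>)
            = expectation (\<lambda>\<omega>. (\<Sum>k=1..n. Y (int k) \<omega> * Y_mean n \<omega>) / real n)"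
      by (intro Bochner_Integration.integral_cong)
         (simp_all add: sample_mean_def sum_distrib_right sum_divide_distrib)
    then show ?thesis
      by (simp only: integral_divide_zero Bochner_Integration.integral_sum
          integrable_mult_square_integrable square_integrable_Y square_integrable_Y_mean)
  qed
  then have "\<bar>expectation (\<lambda>\<omega>. Y_mean n \<omega> * Y_mean n \<omega>)\<bar>
               \<le> (\<Sum>k=1..n. \<bar>expectation (\<lambda>\<omega>. Y (int k) \<omega> * Y_mean n \<omega>)\<bar>) / real n"
    by (simp add: divide_right_mono)
  also have "\<dots> \<le> (\<Sum>k=1..n. abs_autocov_sum / real n) / real n"
    by (intro divide_right_mono sum_mono abs_expectation_Y_mult_Y_mean assms) simp
  also have "\<dots> = abs_autocov_sum / real n"
    using assms by simp
  finally show ?thesis .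
qed

lemma abs_expectation_centered_mult:
  assumes "n > 0"
  shows "\<bar>expectation (\<lambda>\<omega>. (Y a \<omega> - Y_mean n \<omega>) * (Y b \<omega> - Y_mean n \<omega>))\<bar>
           \<le> \<bar>autocov M Y (b - a)\<bar> + 3 * abs_autocov_sum / real n"
proof -
  have "expectation (\<lambda>\<omega>. (Y a \<omega> - Y_mean n \<omega>) * (Y b \<omega> - Y_mean n \<omega>))
          = expectation (\<lambda>\<omega>. Y a \<omega> * Y b \<omega>) - expectation (\<lambda>\<omega>. Y a \<omega> * Y_mean n \<omega>)
            - expectation (\<lambda>\<omega>. Y b \<omega> * Y_mean n \<omega>) + expectation (\<lambda>\<omega>. Y_mean n \<omega> * Y_mean n \<omega>)"
    by (simp add: algebra_simps integrable_mult_square_integrable square_integrable_Y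
        square_integrable_Y_mean)
  then show ?thesis
    using abs_expectation_Y_mult_Y_mean[OF assms, of a] abs_expectation_Y_mult_Y_mean[OF assms, of b]
      abs_expectation_Y_mean_square[OF assms]
    unfolding expectation_Y_mult by linarith
qed

lemma abs_expectation_shifted_centered_mult:
  assumes "n > 0" and "\<bar>\<alpha>\<bar> \<le> D" "\<bar>\<beta>\<bar> \<le> D"
  shows "\<bar>expectation (\<lambda>\<omega>. (\<alpha> + (Y a \<omega> - Y_mean n \<omega>)) * (\<beta> + (Y b \<omega> - Y_mean n \<omega>)))\<bar>
           \<le> D\<^sup>2 + \<bar>autocov M Y (b - a)\<bar> + 3 * abs_autocov_sum / real n"
proof -
  define u where "u k \<omega> = Y k \<omega> - Y_mean n \<omega>" for k \<omega>
  have u: "square_integrable M (u k)" "expectation (u k) = 0" for k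
    unfolding u_def using square_integrable_Y square_integrable_Y_mean
    by (auto simp: square_integrable_diff integrable_square_integrable expectation_Y
        expectation_Y_mean)
  have "expectation (\<lambda>\<omega>. (\<alpha> + u a \<omega>) * (\<beta> + u b \<omega>)) = \<alpha> * \<beta> + expectation (\<lambda>\<omega>. u a \<omega> * u b \<omega>)"
    using u by (simp add: algebra_simps integrable_mult_square_integrable
        integrable_square_integrable prob_space)
  moreover have "\<bar>\<alpha> * \<beta>\<bar> \<le> D\<^sup>2"
    using assms by (simp add: abs_mult power2_eq_square mult_mono')
  moreover have "\<bar>expectation (\<lambda>\<omega>. u a \<omega> * u b \<omega>)\<bar>
                   \<le> \<bar>autocov M Y (b - a)\<bar> + 3 * abs_autocov_sum / real n"
    unfolding u_def by (rule abs_expectation_centered_mult[OF \<open>n > 0\<close>])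
  ultimately show ?thesis
    unfolding u_def by linarith
qed

lemma abs_expectation_gamma_hat_le:
  fixes c :: "nat \<Rightarrow> real"
  assumes "n > 0" and D: "\<And>i k. \<bar>c i - c k\<bar> \<le> D"
  shows "\<bar>expectation (\<lambda>\<omega>. gamma_hat n (\<lambda>i. c i + Y (int i) \<omega>) j)\<bar>
           \<le> D\<^sup>2 + \<bar>autocov M Y (int j)\<bar> + 3 * abs_autocov_sum / real n"
proof -
  define a where "a i = c i - sample_mean n c" for i
  define b where "b = D\<^sup>2 + \<bar>autocov M Y (int j)\<bar> + 3 * abs_autocov_sum / real n"
  let ?e = "\<lambda>i \<omega>. a i + (Y (int i) \<omega> - Y_mean n \<omega>)"
  have centered: "c i + Y (int i) \<omega> - sample_mean n (\<lambda>i. c i + Y (int i) \<omega>) = ?e i \<omega>" for i \<omega>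
    by (simp add: sample_mean_add a_def)
  have a_bound: "\<bar>a i\<bar> \<le> D" for i
    unfolding a_def by (rule abs_diff_sample_mean_le[OF \<open>n > 0\<close> D])
  have lag_term: "\<bar>expectation (\<lambda>\<omega>. ?e i \<omega> * ?e (i + j) \<omega>)\<bar> \<le> b" for i
    using abs_expectation_shifted_centered_mult[OF \<open>n > 0\<close> a_bound[of i] a_bound[of "i + j"],
        where a = "int i" and b = "int (i + j)"]
    by (simp add: b_def)
  have "expectation (\<lambda>\<omega>. gamma_hat n (\<lambda>i. c i + Y (int i) \<omega>) j)
          = (\<Sum>i=1..n-j. expectation (\<lambda>\<omega>. ?e i \<omega> * ?e (i + j) \<omega>)) / real n"
    using square_integrable_add[OF square_integrable_const square_integrable_Y]
    by (simp only: expectation_gamma_hat centered)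
  then have "\<bar>expectation (\<lambda>\<omega>. gamma_hat n (\<lambda>i. c i + Y (int i) \<omega>) j)\<bar>
               \<le> (\<Sum>i=1..n-j. \<bar>expectation (\<lambda>\<omega>. ?e i \<omega> * ?e (i + j) \<omega>)\<bar>) / real n"
    by (simp add: divide_right_mono)
  also have "\<dots> \<le> (\<Sum>i=1..n-j. b) / real n"
    by (intro divide_right_mono sum_mono lag_term) simp
  also have "\<dots> \<le> real n * b / real n"
  proof -
    have "0 \<le> b"
      using abs_autocov_sum_nonneg by (simp add: b_def)
    then show ?thesis
      by (intro divide_right_mono) (simp_all add: mult_right_mono)
  qed
  also have "\<dots> = b"
    using \<open>n > 0\<close> by simp
  finally show ?thesis
    unfolding b_def .
qed

lemma expectation_lrv_est_le:
  fixes c :: "nat \<Rightarrow> real"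
  assumes "n > 0" and D: "\<And>i k. \<bar>c i - c k\<bar> \<le> D"
  shows "expectation (\<lambda>\<omega>. lrv_est n q (\<lambda>i. c i + Y (int i) \<omega>))
           \<le> (2 * real q + 1) * (D\<^sup>2 + 3 * abs_autocov_sum / real n) + 2 * abs_autocov_sum"
proof -
  define b where "b j = D\<^sup>2 + \<bar>autocov M Y (int j)\<bar> + 3 * abs_autocov_sum / real n" for j
  have "expectation (\<lambda>\<omega>. lrv_est n q (\<lambda>i. c i + Y (int i) \<omega>)) \<le> b 0 + 2 * (\<Sum>j=1..q. b j)"
    using square_integrable_add[OF square_integrable_const square_integrable_Y]
      abs_expectation_gamma_hat_le[OF \<open>n > 0\<close> D]
    unfolding b_def by (rule expectation_lrv_est_le_lag_bounds)
  also have "\<dots> = (2 * real q + 1) * (D\<^sup>2 + 3 * abs_autocov_sum / real n)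
                  + (\<bar>autocov M Y 0\<bar> + 2 * (\<Sum>j=1..q. \<bar>autocov M Y (int j)\<bar>))"
  proof -
    have "(\<Sum>j=1..q. b j) = real q * (D\<^sup>2 + 3 * abs_autocov_sum / real n)
                             + (\<Sum>j=1..q. \<bar>autocov M Y (int j)\<bar>)"
      by (simp add: b_def sum.distrib algebra_simps)
    then show ?thesis
      by (simp add: b_def ring_distribs add_divide_distrib)
  qed
  also have "\<dots> \<le> (2 * real q + 1) * (D\<^sup>2 + 3 * abs_autocov_sum / real n) + 2 * abs_autocov_sum"
  proof -
    have "\<bar>autocov M Y 0\<bar> + (\<Sum>j=1..q. \<bar>autocov M Y (int j)\<bar>) = (\<Sum>j=0..q. \<bar>autocov M Y (int j)\<bar>)"
      by (simp add: sum.atLeast_Suc_atMost)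
    also have "\<dots> \<le> abs_autocov_sum"
      by (rule sum_abs_autocov_le) (auto simp: inj_on_def)
    finally show ?thesis
      by simp
  qed
  finally show ?thesis .
qed

end

lemma centered_stationary_if_fourth_order_stationary:
  assumes "prob_space M" and stat: "fourth_order_stationary M Y"
    and "\<And>k. (\<integral>\<omega>. Y k \<omega> \<partial>M) = 0"
    and "(\<lambda>j. \<bar>autocov M Y j\<bar>) summable_on UNIV"
  shows "centered_stationary M Y"
proof -
  interpret prob_space M by fact
  show ?thesis
  proof
    show "square_integrable M (Y k)" for k
      using stat by (intro square_integrable_of_fourth_moment) (auto simp: fourth_order_stationary_def)
    show "expectation (\<lambda>\<omega>. Y k \<omega> * Y (k + h) \<omega>) = expectation (\<lambda>\<omega>. Y 0 \<omega> * Y h \<omega>)" for k h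
      using stat by (simp add: fourth_order_stationary_def)
  qed fact+
qed

section \<open>Boundedness in probability\<close>

lemma (in prob_space) bounded_in_prob_if_expectation_bounded:
  assumes nonneg: "\<And>n \<omega>. 0 \<le> Z n \<omega>"
    and bounded: "\<forall>\<^sub>F n in sequentially. integrable M (Z n) \<and> expectation (Z n) \<le> K"
  shows "bounded_in_prob M Z"
  unfolding bounded_in_prob_def
proof (intro allI impI)
  fix \<epsilon> :: real
  assume "\<epsilon> > 0"
  define B where "B = 2 * (\<bar>K\<bar> + 1) / \<epsilon>"
  have "B > 0"
    using \<open>\<epsilon> > 0\<close> by (simp add: B_def)
  have "\<forall>\<^sub>F n in sequentially. prob {\<omega> \<in> space M. B < \<bar>Z n \<omega>\<bar>} < \<epsilon>"
    using bounded
  proof eventually_elim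
    case (elim n)
    have "prob {\<omega> \<in> space M. B < \<bar>Z n \<omega>\<bar>} \<le> prob {\<omega> \<in> space M. B \<le> Z n \<omega>}"
      using elim nonneg by (intro finite_measure_mono) auto
    also have "\<dots> \<le> expectation (Z n) / B"
      using elim nonneg \<open>B > 0\<close> by (intro integral_Markov_inequality_measure[where A = "{}"]) auto
    also have "\<dots> \<le> (\<bar>K\<bar> + 1) / B"
      using elim \<open>B > 0\<close> by (intro divide_right_mono) auto
    also have "\<dots> = \<epsilon> / 2"
      using \<open>\<epsilon> > 0\<close> abs_ge_zero[of K] by (simp add: B_def field_simps)
    finally show ?case
      using \<open>\<epsilon> > 0\<close> by simp
  qed
  then show "\<exists>B. \<forall>\<^sub>F n in sequentially. prob {\<omega> \<in> space M. B < \<bar>Z n \<omega>\<bar>} < \<epsilon>"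
    by blast
qed

lemma (in centered_stationary) bounded_in_prob_lrv_est:
  fixes c :: "nat \<Rightarrow> nat \<Rightarrow> real" and D :: "nat \<Rightarrow> real" and q :: "nat \<Rightarrow> nat"
  assumes c: "\<And>n i k. \<bar>c n i - c n k\<bar> \<le> D n"
    and q_pos: "\<And>n. q n > 0"
    and q_D: "(\<lambda>n. real (q n) * (D n)\<^sup>2) \<in> O(\<lambda>_. 1)"
    and q_small: "(\<lambda>n. real (q n) / real n) \<longlonglongrightarrow> 0"
  shows "bounded_in_prob M (\<lambda>n \<omega>. lrv_est n (q n) (\<lambda>i. c n i + Y (int i) \<omega>))"
proof -
  let ?G = abs_autocov_sum
  obtain C where "\<forall>\<^sub>F n in sequentially. real (q n) * (D n)\<^sup>2 \<le> C"
    using q_D by (auto elim!: landau_o.bigE)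
  moreover have "\<forall>\<^sub>F n in sequentially. real (q n) / real n \<le> 1"
    using order_tendstoD(2)[OF q_small, of 1] by (auto elim: eventually_mono)
  moreover have "\<forall>\<^sub>F n in sequentially. n > 0"
    by (rule eventually_gt_at_top)
  ultimately have "\<forall>\<^sub>F n in sequentially.
      integrable M (\<lambda>\<omega>. lrv_est n (q n) (\<lambda>i. c n i + Y (int i) \<omega>))
      \<and> expectation (\<lambda>\<omega>. lrv_est n (q n) (\<lambda>i. c n i + Y (int i) \<omega>)) \<le> 3 * C + 11 * ?G"
  proof eventually_elim
    case (elim n)
    have "0 \<le> (D n)\<^sup>2 + 3 * ?G / real n"
      using abs_autocov_sum_nonneg by simp
    then have "(2 * real (q n) + 1) * ((D n)\<^sup>2 + 3 * ?G / real n)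
                 \<le> 3 * real (q n) * ((D n)\<^sup>2 + 3 * ?G / real n)"
      using q_pos[of n] by (intro mult_right_mono) auto
    also have "\<dots> = 3 * (real (q n) * (D n)\<^sup>2) + 9 * ?G * (real (q n) / real n)"
      by (simp add: algebra_simps)
    also have "\<dots> \<le> 3 * C + 9 * ?G"
      using elim abs_autocov_sum_nonneg by (intro add_mono mult_left_mono mult_left_le) auto
    finally show ?case
      using expectation_lrv_est_le[where c = "c n" and q = "q n", OF \<open>n > 0\<close> c]
        integrable_lrv_est[OF square_integrable_add[OF square_integrable_const square_integrable_Y]]
      by auto
  qed
  then show ?thesis
    by (rule bounded_in_prob_if_expectation_bounded[OF lrv_est_nonneg])
qed

theorem propositionD1:
  fixes M :: "'a measure" and Y :: "int \<Rightarrow> 'a \<Rightarrow> real"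
    and N :: "'b measure" and W :: "real \<Rightarrow> 'b \<Rightarrow> real"
    and \<sigma> \<mu> \<theta> :: real and \<Delta> :: "nat \<Rightarrow> real" and q :: "nat \<Rightarrow> nat"
    and kstar :: "nat \<Rightarrow> nat" and X :: "nat \<Rightarrow> nat \<Rightarrow> 'a \<Rightarrow> real"
  assumes M: "prob_space M"
    and stat: "fourth_order_stationary M Y"
    and mean0: "\<And>k. (\<integral>\<omega>. Y k \<omega> \<partial>M) = 0"
    and BM: "std_brownian_motion N W"
    and sigma_pos: "\<sigma> > 0"
    and FCLT: "converges_in_dist_D M (partial_sum_process Y) N (\<lambda>\<omega> t. \<sigma> * W t \<omega>)"
    and gamma_summable: "(\<lambda>j. \<bar>autocov M Y j\<bar>) summable_on UNIV"
    and cum_bounded: "\<exists>B. \<forall>h. (\<lambda>(r, s). \<bar>cum4 M Y h r s\<bar>) summable_on UNIV \<and>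
                           (\<Sum>\<^sub>\<infinity>(r, s). \<bar>cum4 M Y h r s\<bar>) \<le> B"
    and theta: "0 < \<theta>" "\<theta> < 1"
    and kstar_def: "\<And>n. kstar n = nat \<lfloor>real n * \<theta>\<rfloor>"
    and X_def: "\<And>n i \<omega>. X n i \<omega> = \<mu> + (if i \<le> kstar n then 0 else \<Delta> n) + Y (int i) \<omega>"
    and q_pos: "\<And>n. q n > 0"
    and n_Delta: "filterlim (\<lambda>n. real n * (\<Delta> n)\<^sup>2) at_top sequentially"
    and khat_rate: "bounded_in_prob M
          (\<lambda>n \<omega>. (\<Delta> n)\<^sup>2 * \<bar>real (khat n (\<lambda>i. X n i \<omega>)) - real (kstar n)\<bar>)"
    and q_Delta: "(\<lambda>n. real (q n) * (\<Delta> n)\<^sup>2) \<in> O(\<lambda>_. 1)"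
    and q_infty: "filterlim q at_top sequentially"
    and q_small: "(\<lambda>n. real (q n) / real n) \<longlonglongrightarrow> 0"
  shows "bounded_in_prob M (\<lambda>n \<omega>. lrv_est n (q n) (\<lambda>i. X n i \<omega>))"
proof -
  interpret centered_stationary M Y
    using M stat mean0 gamma_summable by (rule centered_stationary_if_fourth_order_stationary)
  define c where "c n i = \<mu> + (if i \<le> kstar n then 0 else \<Delta> n)" for n i
  have "\<bar>c n i - c n k\<bar> \<le> \<bar>\<Delta> n\<bar>" for n i k
    by (simp add: c_def)
  then have "bounded_in_prob M (\<lambda>n \<omega>. lrv_est n (q n) (\<lambda>i. c n i + Y (int i) \<omega>))"
    using q_pos q_Delta q_small by (intro bounded_in_prob_lrv_est[where D = "\<lambda>n. \<bar>\<Delta> n\<bar>"]) simp_all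
  then show ?thesis
    by (simp add: X_def c_def)
qed

end
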